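(* The optimal objective value of the multi-commodity NPP equals the optimal objective value of the conjugate bilevel formulation $\max_{w,t}\{w^\top t : w\in\mathbb{R}^{\mathcal{A}_1},\ w\ge 0,\ t\in\mathbf{T}(w)\}$.
   Context: Let $G=(\mathcal{V},\mathcal{A})$ be a directed graph with arc costs $c\in\mathbb{R}^{\mathcal{A}}$, $c\ge0$, arcs partitioned into a nonempty set $\mathcal{A}_1\subsetneq\mathcal{A}$ of tolled arcs and $\mathcal{A}_2=\mathcal{A}\setminus\mathcal{A}_1$ of toll-free arcs; $N$ is the node–arc incidence matrix. There is a finite set $\mathcal{K}$ of commodities, commodity $k$ having origin $o^k$, destination $d^k$, with an $o^k$–$d^k$ path of toll-free arcs assumed to exist; $b^k\in\mathbb{R}^{\mathcal{V}}$ has $b^k_{o^k}=1$, $b^k_{d^k}=-1$, other entries $0$. Tolls are vectors $t\in\mathbb{R}^{\mathcal{A}_1}$, $t\ge0$, identified with the vector $\bar t\in\mathbb{R}^{\mathcal{A}}$ equal to $t$ on $\mathcal{A}_1$ and $0$ on $\mathcal{A}_2$; for $x\in\mathbb{R}^{\mathcal{A}}$, $x_{\mathcal{A}_1}$ denotes its restriction to $\mathcal{A}_1$. Follower $k$'s reaction set is $\mathbf{R}^k(t)=\arg\min_x\{c^\top x+t^\top x_{\mathcal{A}_1}: Nx=b^k,\ x\ge0\}$, and the multi-commodity NPP is $\max_{t,x^k}\{\sum_{k}t^\top x^k_{\mathcal{A}_1}: t\ge0,\ x^k\in\mathbf{R}^k(t)\ \forall k\}$. For $w\in\mathbb{R}^{\mathcal{A}_1}$,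 $w\ge0$, the conjugate follower program is $\max_{t,(y^k)}\{\sum_{k\in\mathcal{K}}(b^k)^\top y^k - w^\top t : N^\top y^k-\bar t\le c\ \forall k\in\mathcal{K},\ t\ge 0\}$ with $t\in\mathbb{R}^{\mathcal{A}_1}$, $y^k\in\mathbb{R}^{\mathcal{V}}$, and $\mathbf{T}(w)$ denotes the set of $t$ that are parts of optimal solutions of this program. *)

theory Defs
  imports "HOL-Analysis.Analysis"
begin

text \<open>Directed graph: vertex set V, arc set A, each arc a goes from tail a to head a.
  Vectors indexed by arcs/vertices are real-valued functions; only their values on
  A (resp. A1, V) matter.\<close>

definition incidence :: "('a \<Rightarrow> 'v) \<Rightarrow> ('a \<Rightarrow> 'v) \<Rightarrow> 'v \<Rightarrow> 'a \<Rightarrow> real" where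
  "incidence tail head v a = (if tail a = v then 1 else 0) - (if head a = v then 1 else 0)"

definition demand :: "'v \<Rightarrow> 'v \<Rightarrow> 'v \<Rightarrow> real" where
  "demand o' d v = (if v = o' then 1 else if v = d then -1 else 0)"

definition toll_free_path ::
  "'a set \<Rightarrow> 'a set \<Rightarrow> ('a \<Rightarrow> 'v) \<Rightarrow> ('a \<Rightarrow> 'v) \<Rightarrow> 'v \<Rightarrow> 'v \<Rightarrow> bool" where
  "toll_free_path A A1 tail head o' d \<longleftrightarrow>
     (\<exists>ps. ps \<noteq> [] \<and> set ps \<subseteq> A - A1 \<and> tail (List.hd ps) = o' \<and> head (last ps) = d \<and>
        (\<forall>i. Suc i < length ps \<longrightarrow> head (ps ! i) = tail (ps ! Suc i)))"

definition flow_feasible ::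
  "'v set \<Rightarrow> 'a set \<Rightarrow> ('a \<Rightarrow> 'v) \<Rightarrow> ('a \<Rightarrow> 'v) \<Rightarrow> ('v \<Rightarrow> real) \<Rightarrow> ('a \<Rightarrow> real) \<Rightarrow> bool" where
  "flow_feasible V A tail head b x \<longleftrightarrow>
     (\<forall>v\<in>V. (\<Sum>a\<in>A. incidence tail head v a * x a) = b v) \<and> (\<forall>a\<in>A. 0 \<le> x a)"

definition follower_cost ::
  "'a set \<Rightarrow> 'a set \<Rightarrow> ('a \<Rightarrow> real) \<Rightarrow> ('a \<Rightarrow> real) \<Rightarrow> ('a \<Rightarrow> real) \<Rightarrow> real" where
  "follower_cost A A1 c t x = (\<Sum>a\<in>A. c a * x a) + (\<Sum>a\<in>A1. t a * x a)"

definition reaction ::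
  "'v set \<Rightarrow> 'a set \<Rightarrow> 'a set \<Rightarrow> ('a \<Rightarrow> 'v) \<Rightarrow> ('a \<Rightarrow> 'v) \<Rightarrow> ('a \<Rightarrow> real)
    \<Rightarrow> ('v \<Rightarrow> real) \<Rightarrow> ('a \<Rightarrow> real) \<Rightarrow> ('a \<Rightarrow> real) set" where
  "reaction V A A1 tail head c b t =
     {x. flow_feasible V A tail head b x \<and>
         (\<forall>x'. flow_feasible V A tail head b x' \<longrightarrow> follower_cost A A1 c t x \<le> follower_cost A A1 c t x')}"

definition npp_value ::
  "'v set \<Rightarrow> 'a set \<Rightarrow> 'a set \<Rightarrow> ('a \<Rightarrow> 'v) \<Rightarrow> ('a \<Rightarrow> 'v) \<Rightarrow> ('a \<Rightarrow> real)
    \<Rightarrow> 'k set \<Rightarrow> ('k \<Rightarrow> 'v) \<Rightarrow> ('k \<Rightarrow> 'v) \<Rightarrow> ereal" where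
  "npp_value V A A1 tail head c K orig dest =
     Sup {ereal (\<Sum>k\<in>K. \<Sum>a\<in>A1. t a * x k a) | t x.
            (\<forall>a\<in>A1. 0 \<le> t a) \<and>
            (\<forall>k\<in>K. x k \<in> reaction V A A1 tail head c (demand (orig k) (dest k)) t)}"

definition tbar :: "'a set \<Rightarrow> ('a \<Rightarrow> real) \<Rightarrow> 'a \<Rightarrow> real" where
  "tbar A1 t a = (if a \<in> A1 then t a else 0)"

definition conj_feasible ::
  "'v set \<Rightarrow> 'a set \<Rightarrow> 'a set \<Rightarrow> ('a \<Rightarrow> 'v) \<Rightarrow> ('a \<Rightarrow> 'v) \<Rightarrow> ('a \<Rightarrow> real)
    \<Rightarrow> 'k set \<Rightarrow> ('a \<Rightarrow> real) \<Rightarrow> ('k \<Rightarrow> 'v \<Rightarrow> real) \<Rightarrow> bool" where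
  "conj_feasible V A A1 tail head c K t y \<longleftrightarrow>
     (\<forall>a\<in>A1. 0 \<le> t a) \<and>
     (\<forall>k\<in>K. \<forall>a\<in>A. (\<Sum>v\<in>V. incidence tail head v a * y k v) - tbar A1 t a \<le> c a)"

definition conj_objective ::
  "'v set \<Rightarrow> 'a set \<Rightarrow> 'k set \<Rightarrow> ('k \<Rightarrow> 'v) \<Rightarrow> ('k \<Rightarrow> 'v) \<Rightarrow> ('a \<Rightarrow> real)
    \<Rightarrow> ('a \<Rightarrow> real) \<Rightarrow> ('k \<Rightarrow> 'v \<Rightarrow> real) \<Rightarrow> real" where
  "conj_objective V A1 K orig dest w t y =
     (\<Sum>k\<in>K. \<Sum>v\<in>V. demand (orig k) (dest k) v * y k v) - (\<Sum>a\<in>A1. w a * t a)"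

definition conj_T ::
  "'v set \<Rightarrow> 'a set \<Rightarrow> 'a set \<Rightarrow> ('a \<Rightarrow> 'v) \<Rightarrow> ('a \<Rightarrow> 'v) \<Rightarrow> ('a \<Rightarrow> real)
    \<Rightarrow> 'k set \<Rightarrow> ('k \<Rightarrow> 'v) \<Rightarrow> ('k \<Rightarrow> 'v) \<Rightarrow> ('a \<Rightarrow> real) \<Rightarrow> ('a \<Rightarrow> real) set" where
  "conj_T V A A1 tail head c K orig dest w =
     {t. \<exists>y. conj_feasible V A A1 tail head c K t y \<and>
            (\<forall>t' y'. conj_feasible V A A1 tail head c K t' y' \<longrightarrow>
               conj_objective V A1 K orig dest w t' y' \<le> conj_objective V A1 K orig dest w t y)}"

definition conj_bilevel_value ::
  "'v set \<Rightarrow> 'a set \<Rightarrow> 'a set \<Rightarrow> ('a \<Rightarrow> 'v) \<Rightarrow> ('a \<Rightarrow> 'v) \<Rightarrow> ('a \<Rightarrow> real)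
    \<Rightarrow> 'k set \<Rightarrow> ('k \<Rightarrow> 'v) \<Rightarrow> ('k \<Rightarrow> 'v) \<Rightarrow> ereal" where
  "conj_bilevel_value V A A1 tail head c K orig dest =
     Sup {ereal (\<Sum>a\<in>A1. w a * t a) | w t.
            (\<forall>a\<in>A1. 0 \<le> w a) \<and> t \<in> conj_T V A A1 tail head c K orig dest w}"

end

theory Submission
  imports Defs
begin

text \<open>
  Both values are suprema of the same set of numbers. If every follower k answers the tolls t
  with an optimal flow x_k, LP duality for the follower's problem provides node potentials y_k
  whose value equals the follower's cost, and then (t, y) is optimal in the conjugate program for
  w = \<Sum>_k x_k, with w\<bullet>t equal to the leader's revenue.
  Conversely, if t \<in> T(w), LP duality for the conjugate program provides flows x_k with
  \<Sum>_k x_k \<le> w on the tolled arcs whose total cost is at most the optimal value.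
  The duality gaps of the followers are nonnegative and add up to at most
  t\<bullet>(\<Sum>_k x_k - w) \<le> 0, so they all vanish: each x_k is a reaction to t and the
  revenue is w\<bullet>t.
  LP duality itself is derived from Farkas' lemma, proved by Fourier--Motzkin elimination.
\<close>

section \<open>Farkas' lemma by Fourier--Motzkin elimination\<close>

text \<open>A pair (q, d) stands for the inequality \<Sum>_i q i * z i \<le> d.\<close>
type_synonym 'i ineq = "('i \<Rightarrow> real) \<times> real"

inductive_set ineq_cone :: "'i ineq set \<Rightarrow> 'i ineq set" for C where
  base: "q \<in> C \<Longrightarrow> q \<in> ineq_cone C"
| add: "p \<in> ineq_cone C \<Longrightarrow> q \<in> ineq_cone C \<Longrightarrow> (\<lambda>i. fst p i + fst q i, snd p + snd q) \<in> ineq_cone C"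
| scale: "q \<in> ineq_cone C \<Longrightarrow> 0 \<le> a \<Longrightarrow> (\<lambda>i. a * fst q i, a * snd q) \<in> ineq_cone C"

lemma ineq_cone_trans: "q \<in> ineq_cone C' \<Longrightarrow> C' \<subseteq> ineq_cone C \<Longrightarrow> q \<in> ineq_cone C"
  by (induction rule: ineq_cone.induct) (auto intro: ineq_cone.intros)

lemma ineq_cone_coeff_zero: "q \<in> ineq_cone C \<Longrightarrow> \<forall>p\<in>C. fst p i = 0 \<Longrightarrow> fst q i = 0"
  by (induction rule: ineq_cone.induct) auto

lemma ineq_cone_image_coefficients:
  assumes "q \<in> ineq_cone (h ` J)" "finite J"
  shows "\<exists>u. (\<forall>j\<in>J. 0 \<le> u j) \<and> (\<forall>i. fst q i = (\<Sum>j\<in>J. u j * fst (h j) i))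
           \<and> snd q = (\<Sum>j\<in>J. u j * snd (h j))"
  using assms
proof (induction rule: ineq_cone.induct)
  case (base q)
  then obtain j0 where "j0 \<in> J" "q = h j0" by blast
  moreover from \<open>j0 \<in> J\<close> have "J \<inter> {j. j = j0} = {j0}" by blast
  ultimately show ?case
    using \<open>finite J\<close> by (intro exI[of _ "\<lambda>j. of_bool (j = j0)"]) simp
next
  case (add p q)
  then obtain u u' where "\<forall>j\<in>J. 0 \<le> u j" "\<forall>j\<in>J. 0 \<le> u' j"
    and "\<forall>i. fst p i = (\<Sum>j\<in>J. u j * fst (h j) i)" "snd p = (\<Sum>j\<in>J. u j * snd (h j))"
    and "\<forall>i. fst q i = (\<Sum>j\<in>J. u' j * fst (h j) i)" "snd q = (\<Sum>j\<in>J. u' j * snd (h j))"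
    by blast
  then show ?case
    by (intro exI[of _ "\<lambda>j. u j + u' j"]) (simp add: distrib_right sum.distrib)
next
  case (scale q a)
  then obtain u where "\<forall>j\<in>J. 0 \<le> u j"
    and "\<forall>i. fst q i = (\<Sum>j\<in>J. u j * fst (h j) i)" "snd q = (\<Sum>j\<in>J. u j * snd (h j))"
    by blast
  then show ?case
    using scale.hyps by (intro exI[of _ "\<lambda>j. a * u j"]) (simp add: sum_distrib_left mult.assoc)
qed

definition ineqs_hold :: "'i set \<Rightarrow> 'i ineq set \<Rightarrow> ('i \<Rightarrow> real) \<Rightarrow> bool" where
  "ineqs_hold I C z \<longleftrightarrow> (\<forall>q\<in>C. (\<Sum>i\<in>I. fst q i * z i) \<le> snd q)"

definition fm_combine :: "'i \<Rightarrow> 'i ineq \<Rightarrow> 'i ineq \<Rightarrow> 'i ineq" where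
  "fm_combine i0 p n =
     (\<lambda>i. - fst n i0 * fst p i + fst p i0 * fst n i, - fst n i0 * snd p + fst p i0 * snd n)"

definition fm_eliminate :: "'i \<Rightarrow> 'i ineq set \<Rightarrow> 'i ineq set" where
  "fm_eliminate i0 C = {q \<in> C. fst q i0 = 0} \<union>
     (\<lambda>(p, n). fm_combine i0 p n) ` ({p \<in> C. 0 < fst p i0} \<times> {n \<in> C. fst n i0 < 0})"

lemma finite_fm_eliminate: "finite C \<Longrightarrow> finite (fm_eliminate i0 C)"
  by (simp add: fm_eliminate_def)

lemma fm_eliminate_coeff_zero: "q \<in> fm_eliminate i0 C \<Longrightarrow> fst q i0 = 0"
  by (auto simp: fm_eliminate_def fm_combine_def)

lemma fm_eliminate_subset_cone: "fm_eliminate i0 C \<subseteq> ineq_cone C"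
proof
  fix q assume "q \<in> fm_eliminate i0 C"
  then consider "q \<in> C"
    | p n where "p \<in> C" "0 < fst p i0" "n \<in> C" "fst n i0 < 0" "q = fm_combine i0 p n"
    unfolding fm_eliminate_def by auto
  then show "q \<in> ineq_cone C"
  proof cases
    case 2
    have "(\<lambda>i. - fst n i0 * fst p i, - fst n i0 * snd p) \<in> ineq_cone C"
      using ineq_cone.scale[OF ineq_cone.base[OF \<open>p \<in> C\<close>], of "- fst n i0"] 2 by simp
    moreover have "(\<lambda>i. fst p i0 * fst n i, fst p i0 * snd n) \<in> ineq_cone C"
      using ineq_cone.scale[OF ineq_cone.base[OF \<open>n \<in> C\<close>], of "fst p i0"] 2 by simp
    ultimately show ?thesis
      using ineq_cone.add 2 unfolding fm_combine_def by fastforce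
  qed (rule ineq_cone.base)
qed

lemma exists_between_finite:
  fixes lo hi :: "'b \<Rightarrow> real"
  assumes "finite P" "finite N" "\<forall>n\<in>N. \<forall>p\<in>P. lo n \<le> hi p"
  shows "\<exists>v. (\<forall>n\<in>N. lo n \<le> v) \<and> (\<forall>p\<in>P. v \<le> hi p)"
proof (cases "N = {}")
  case True
  then show ?thesis
    using assms(1) by (intro exI[of _ "Min (hi ` P)"]) simp
next
  case False
  then show ?thesis
    using assms by (intro exI[of _ "Max (lo ` N)"]) (simp add: Max_le_iff)
qed

lemma fm_eliminate_solution_extends:
  assumes "finite I" "finite C" "i0 \<notin> I" "ineqs_hold I (fm_eliminate i0 C) z"
  shows "\<exists>v. ineqs_hold (insert i0 I) C (z(i0 := v))"
proof -
  define s where "s q = (\<Sum>i\<in>I. fst q i * z i)" for q :: "'a ineq"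
  define bound where "bound q = (snd q - s q) / fst q i0" for q
  define CP where "CP = {p \<in> C. 0 < fst p i0}"
  define CN where "CN = {n \<in> C. fst n i0 < 0}"
  have "bound n \<le> bound p" if "n \<in> CN" "p \<in> CP" for n p
  proof -
    have "fm_combine i0 p n \<in> fm_eliminate i0 C"
      using that unfolding fm_eliminate_def CP_def CN_def by blast
    with assms(4) have "s (fm_combine i0 p n) \<le> snd (fm_combine i0 p n)"
      by (simp add: ineqs_hold_def s_def)
    moreover have "s (fm_combine i0 p n) = - fst n i0 * s p + fst p i0 * s n"
      by (simp add: s_def fm_combine_def left_diff_distrib sum_subtractf sum_negf sum_distrib_left
          mult.assoc)
    moreover have "fst n i0 < 0" "0 < fst p i0"
      using that by (auto simp: CN_def CP_def)
    ultimately show ?thesis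
      by (simp add: bound_def fm_combine_def field_simps)
  qed
  moreover have "finite CP" "finite CN"
    using assms(2) by (auto simp: CP_def CN_def)
  ultimately obtain v where lower: "\<forall>n\<in>CN. bound n \<le> v" and upper: "\<forall>p\<in>CP. v \<le> bound p"
    using exists_between_finite[of CP CN bound bound] by blast
  have "fst q i0 * v + s q \<le> snd q" if "q \<in> C" for q
  proof (cases "fst q i0" "0::real" rule: linorder_cases)
    case less
    with that have "q \<in> CN" by (simp add: CN_def)
    with lower have "bound q \<le> v" by blast
    with less show ?thesis by (simp add: bound_def neg_divide_le_eq mult.commute)
  next
    case equal
    with that have "q \<in> fm_eliminate i0 C" by (simp add: fm_eliminate_def)
    with assms(4) equal show ?thesis by (simp add: ineqs_hold_def s_def)
  next
    case greater
    with that have "q \<in> CP" by (simp add: CP_def)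
    with upper have "v \<le> bound q" by blast
    with greater show ?thesis by (simp add: bound_def le_divide_eq mult.commute)
  qed
  moreover have "(\<Sum>i\<in>insert i0 I. fst q i * (z(i0 := v)) i) = fst q i0 * v + s q" for q
    using assms(1,3) unfolding s_def by (simp, intro sum.cong) auto
  ultimately have "ineqs_hold (insert i0 I) C (z(i0 := v))"
    by (simp add: ineqs_hold_def)
  then show ?thesis ..
qed

lemma infeasible_ineqs_cone_certificate:
  assumes "finite I" "finite C" "\<nexists>z. ineqs_hold I C z"
  shows "\<exists>q\<in>ineq_cone C. (\<forall>i\<in>I. fst q i = 0) \<and> snd q < 0"
  using assms
proof (induction I arbitrary: C rule: finite_induct)
  case empty
  then obtain q where "q \<in> C" "snd q < 0"
    by (auto simp: ineqs_hold_def not_le)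
  then show ?case
    by (intro bexI[of _ q]) (simp_all add: ineq_cone.base)
next
  case (insert i0 I)
  have "\<nexists>z. ineqs_hold I (fm_eliminate i0 C) z"
  proof
    assume "\<exists>z. ineqs_hold I (fm_eliminate i0 C) z"
    then obtain z where "ineqs_hold I (fm_eliminate i0 C) z" ..
    then obtain v where "ineqs_hold (insert i0 I) C (z(i0 := v))"
      using fm_eliminate_solution_extends[OF insert.hyps(1) insert.prems(1) insert.hyps(2)]
      by blast
    with insert.prems(2) show False
      by blast
  qed
  with insert.IH[OF finite_fm_eliminate[OF insert.prems(1)]] obtain q
    where q: "q \<in> ineq_cone (fm_eliminate i0 C)" "\<forall>i\<in>I. fst q i = 0" "snd q < 0"
    by blast
  have "fst q i0 = 0"
    by (rule ineq_cone_coeff_zero[OF q(1)]) (blast intro: fm_eliminate_coeff_zero)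
  moreover have "q \<in> ineq_cone C"
    using ineq_cone_trans[OF q(1) fm_eliminate_subset_cone] .
  ultimately show ?case
    using q(2,3) by (intro bexI[of _ q]) simp_all
qed

definition lp_feasible ::
  "'i set \<Rightarrow> 'j set \<Rightarrow> ('j \<Rightarrow> 'i \<Rightarrow> real) \<Rightarrow> ('j \<Rightarrow> real) \<Rightarrow> ('i \<Rightarrow> real) \<Rightarrow> bool" where
  "lp_feasible I J M r z \<longleftrightarrow> (\<forall>j\<in>J. (\<Sum>i\<in>I. M j i * z i) \<le> r j)"

definition lp_dual_feasible ::
  "'i set \<Rightarrow> 'j set \<Rightarrow> ('j \<Rightarrow> 'i \<Rightarrow> real) \<Rightarrow> ('i \<Rightarrow> real) \<Rightarrow> ('j \<Rightarrow> real) \<Rightarrow> bool" where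
  "lp_dual_feasible I J M p u \<longleftrightarrow> (\<forall>j\<in>J. 0 \<le> u j) \<and> (\<forall>i\<in>I. (\<Sum>j\<in>J. u j * M j i) = p i)"

lemma farkas_lemma:
  assumes "finite I" "finite J" "\<nexists>z. lp_feasible I J M r z"
  shows "\<exists>u. lp_dual_feasible I J M (\<lambda>_. 0) u \<and> (\<Sum>j\<in>J. u j * r j) < 0"
proof -
  let ?C = "(\<lambda>j. (M j, r j)) ` J"
  have "\<nexists>z. ineqs_hold I ?C z"
    using assms(3) by (simp add: ineqs_hold_def lp_feasible_def)
  then obtain q where q: "q \<in> ineq_cone ?C" "\<forall>i\<in>I. fst q i = 0" "snd q < 0"
    using infeasible_ineqs_cone_certificate assms(1,2) by blast
  obtain u where "\<forall>j\<in>J. 0 \<le> u j"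
    and "\<forall>i. fst q i = (\<Sum>j\<in>J. u j * M j i)" "snd q = (\<Sum>j\<in>J. u j * r j)"
    using ineq_cone_image_coefficients[OF q(1) assms(2)] by auto
  with q(2,3) show ?thesis
    by (intro exI[of _ u]) (simp add: lp_dual_feasible_def)
qed

section \<open>Linear programming duality\<close>

text \<open>
  The inequality-form problem maximises \<Sum>_i p i * z i subject to \<^const>\<open>lp_feasible\<close>;
  its dual, the standard-form problem, minimises \<Sum>_j u j * r j subject to
  \<^const>\<open>lp_dual_feasible\<close>.
\<close>

lemma ball_Plus: "(\<forall>x\<in>A <+> B. P x) \<longleftrightarrow> (\<forall>a\<in>A. P (Inl a)) \<and> (\<forall>b\<in>B. P (Inr b))"
  by auto

lemma lp_weak_duality:
  assumes "lp_dual_feasible I J M p u" "lp_feasible I J M r z"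
  shows "(\<Sum>i\<in>I. p i * z i) \<le> (\<Sum>j\<in>J. u j * r j)"
proof -
  have "(\<Sum>i\<in>I. p i * z i) = (\<Sum>i\<in>I. (\<Sum>j\<in>J. u j * M j i) * z i)"
    using assms(1) by (simp add: lp_dual_feasible_def)
  also have "\<dots> = (\<Sum>j\<in>J. u j * (\<Sum>i\<in>I. M j i * z i))"
    by (simp add: sum_distrib_left sum_distrib_right mult.assoc sum.swap[of _ I])
  also have "\<dots> \<le> (\<Sum>j\<in>J. u j * r j)"
    using assms by (intro sum_mono mult_left_mono) (auto simp: lp_dual_feasible_def lp_feasible_def)
  finally show ?thesis .
qed

text \<open>
  Whether \<open>\<nu> = 0\<close> (then the certificate is an improving direction) or not (then the certificate
  divided by \<open>\<nu>\<close> is a better point), averaging with weight \<open>1 / (1 + \<nu>)\<close> improves the given point.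
\<close>

lemma lp_dual_feasible_improve:
  assumes "lp_dual_feasible I J M p u" "\<forall>j\<in>J. 0 \<le> a j" "0 \<le> \<nu>"
    and "\<forall>i\<in>I. (\<Sum>j\<in>J. a j * M j i) = \<nu> * p i"
    and "(\<Sum>j\<in>J. a j * r j) < \<nu> * (\<Sum>j\<in>J. u j * r j)"
  shows "\<exists>u'. lp_dual_feasible I J M p u' \<and> (\<Sum>j\<in>J. u' j * r j) < (\<Sum>j\<in>J. u j * r j)"
proof (intro exI conjI)
  define u' where "u' j = (u j + a j) / (1 + \<nu>)" for j
  show "lp_dual_feasible I J M p u'"
    unfolding lp_dual_feasible_def
  proof (intro conjI ballI)
    show "0 \<le> u' j" if "j \<in> J" for j
      using that assms(1-3) by (simp add: lp_dual_feasible_def u'_def)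
    show "(\<Sum>j\<in>J. u' j * M j i) = p i" if "i \<in> I" for i
      using that assms(1,3,4)
      by (simp add: lp_dual_feasible_def u'_def sum_divide_distrib[symmetric] distrib_right
          sum.distrib) (simp add: field_simps)
  qed
  show "(\<Sum>j\<in>J. u' j * r j) < (\<Sum>j\<in>J. u j * r j)"
    using assms(3,5)
    by (simp add: u'_def sum_divide_distrib[symmetric] distrib_right sum.distrib)
      (simp add: field_simps)
qed

lemma lp_feasible_improve:
  assumes "lp_feasible I J M r z" "0 \<le> \<nu>"
    and "\<forall>j\<in>J. (\<Sum>i\<in>I. M j i * \<delta> i) \<le> \<nu> * r j"
    and "\<nu> * (\<Sum>i\<in>I. p i * z i) < (\<Sum>i\<in>I. p i * \<delta> i)"
  shows "\<exists>z'. lp_feasible I J M r z' \<and> (\<Sum>i\<in>I. p i * z i) < (\<Sum>i\<in>I. p i * z' i)"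
proof (intro exI conjI)
  define z' where "z' i = (z i + \<delta> i) / (1 + \<nu>)" for i
  show "lp_feasible I J M r z'"
    unfolding lp_feasible_def
  proof
    fix j assume "j \<in> J"
    have "(\<Sum>i\<in>I. M j i * z' i) = ((\<Sum>i\<in>I. M j i * z i) + (\<Sum>i\<in>I. M j i * \<delta> i)) / (1 + \<nu>)"
      by (simp add: z'_def sum_divide_distrib[symmetric] distrib_left sum.distrib)
    also have "\<dots> \<le> (r j + \<nu> * r j) / (1 + \<nu>)"
      using assms(1-3) \<open>j \<in> J\<close> by (intro divide_right_mono add_mono) (auto simp: lp_feasible_def)
    also have "\<dots> = r j"
      using assms(2) by (simp add: field_simps)
    finally show "(\<Sum>i\<in>I. M j i * z' i) \<le> r j" .
  qed
  show "(\<Sum>i\<in>I. p i * z i) < (\<Sum>i\<in>I. p i * z' i)"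
    using assms(2,4)
    by (simp add: z'_def sum_divide_distrib[symmetric] distrib_left sum.distrib)
      (simp add: field_simps)
qed

lemma lp_strong_duality_min:
  assumes "finite I" "finite J" "lp_dual_feasible I J M p u"
    and "\<forall>u'. lp_dual_feasible I J M p u' \<longrightarrow> (\<Sum>j\<in>J. u j * r j) \<le> (\<Sum>j\<in>J. u' j * r j)"
  shows "\<exists>z. lp_feasible I J M r z \<and> (\<Sum>j\<in>J. u j * r j) \<le> (\<Sum>i\<in>I. p i * z i)"
proof (rule ccontr)
  assume no_solution: "\<not> ?thesis"
  define val where "val = (\<Sum>j\<in>J. u j * r j)"
  \<comment> \<open>the inequality-form constraints together with a row demanding value \<open>val\<close>\<close>
  let ?J = "J <+> {()}"
  let ?M = "case_sum M (\<lambda>_ i. - p i)"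
  let ?r = "case_sum r (\<lambda>_. - val)"
  have "\<nexists>z. lp_feasible I ?J ?M ?r z"
    using no_solution by (simp add: lp_feasible_def ball_Plus val_def sum_negf)
  moreover have "finite ?J"
    using assms(2) by simp
  ultimately obtain \<alpha> where \<alpha>: "lp_dual_feasible I ?J ?M (\<lambda>_. 0) \<alpha>" "(\<Sum>j\<in>?J. \<alpha> j * ?r j) < 0"
    using farkas_lemma[OF assms(1)] by blast
  have "\<forall>j\<in>J. 0 \<le> \<alpha> (Inl j)" "0 \<le> \<alpha> (Inr ())"
    and "\<forall>i\<in>I. (\<Sum>j\<in>J. \<alpha> (Inl j) * M j i) = \<alpha> (Inr ()) * p i"
    using \<alpha>(1) assms(2) by (auto simp: lp_dual_feasible_def ball_Plus sum.Plus)
  moreover have "(\<Sum>j\<in>J. \<alpha> (Inl j) * r j) < \<alpha> (Inr ()) * val"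
    using \<alpha>(2) assms(2) by (simp add: sum.Plus)
  ultimately show False
    using lp_dual_feasible_improve[OF assms(3)] assms(4) unfolding val_def by (meson not_le)
qed

lemma lp_strong_duality_max:
  assumes "finite I" "finite J" "lp_feasible I J M r z"
    and "\<forall>z'. lp_feasible I J M r z' \<longrightarrow> (\<Sum>i\<in>I. p i * z' i) \<le> (\<Sum>i\<in>I. p i * z i)"
  shows "\<exists>u. lp_dual_feasible I J M p u \<and> (\<Sum>j\<in>J. u j * r j) \<le> (\<Sum>i\<in>I. p i * z i)"
proof (rule ccontr)
  assume no_solution: "\<not> ?thesis"
  define val where "val = (\<Sum>i\<in>I. p i * z i)"
  \<comment> \<open>the standard-form constraints and value bound as inequalities: sign rows, both halves
    of each equation, and the value row\<close>
  let ?R = "J <+> (I <+> (I <+> {()}))"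
  let ?M = "case_sum (\<lambda>j j'. - of_bool (j' = j))
             (case_sum (\<lambda>i j. M j i) (case_sum (\<lambda>i j. - M j i) (\<lambda>_. r)))"
  let ?r = "case_sum (\<lambda>_. 0) (case_sum p (case_sum (\<lambda>i. - p i) (\<lambda>_. val)))"
  have "\<nexists>u. lp_feasible J ?R ?M ?r u"
  proof
    assume "\<exists>u. lp_feasible J ?R ?M ?r u"
    then obtain u where "lp_feasible J ?R ?M ?r u" ..
    then have "lp_dual_feasible I J M p u" "(\<Sum>j\<in>J. u j * r j) \<le> val"
      using assms(2)
      by (auto simp: lp_feasible_def lp_dual_feasible_def ball_Plus
          sum_negf mult.commute intro: order.antisym)
    with no_solution show False
      by (simp add: val_def)
  qed
  moreover have "finite ?R"
    using assms(1,2) by simp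
  ultimately obtain \<alpha> where \<alpha>: "lp_dual_feasible J ?R ?M (\<lambda>_. 0) \<alpha>" "(\<Sum>\<rho>\<in>?R. \<alpha> \<rho> * ?r \<rho>) < 0"
    using farkas_lemma[OF assms(2)] by blast
  define \<delta> where "\<delta> i = \<alpha> (Inr (Inr (Inl i))) - \<alpha> (Inr (Inl i))" for i
  define \<nu> where "\<nu> = \<alpha> (Inr (Inr (Inr ())))"
  have "0 \<le> \<nu>"
    using \<alpha>(1) unfolding lp_dual_feasible_def \<nu>_def by blast
  moreover have "(\<Sum>i\<in>I. M j i * \<delta> i) \<le> \<nu> * r j" if "j \<in> J" for j
  proof -
    have "(\<Sum>\<rho>\<in>?R. \<alpha> \<rho> * ?M \<rho> j) = 0"
      using \<alpha>(1) that by (simp add: lp_dual_feasible_def)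
    then have "(\<Sum>i\<in>I. M j i * \<delta> i) = \<nu> * r j - \<alpha> (Inl j)"
      using that assms(1,2)
      by (simp add: sum.Plus sum_negf \<delta>_def \<nu>_def right_diff_distrib sum_subtractf mult.commute)
    moreover have "0 \<le> \<alpha> (Inl j)"
      using \<alpha>(1) that unfolding lp_dual_feasible_def by blast
    ultimately show ?thesis
      by simp
  qed
  moreover have "\<nu> * val < (\<Sum>i\<in>I. p i * \<delta> i)"
    using \<alpha>(2) assms(1,2)
    by (simp add: sum.Plus sum_negf \<delta>_def \<nu>_def right_diff_distrib sum_subtractf mult.commute)
  ultimately show False
    using lp_feasible_improve[OF assms(3)] assms(4) unfolding val_def by (meson not_le)
qed

section \<open>Followers and the conjugate program\<close>

lemma follower_cost_eq_sum:
  assumes "finite A" "A1 \<subseteq> A"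
  shows "follower_cost A A1 c t x = (\<Sum>a\<in>A. x a * (c a + tbar A1 t a))"
proof -
  have "(\<Sum>a\<in>A. x a * tbar A1 t a) = (\<Sum>a\<in>A. if a \<in> A1 then t a * x a else 0)"
    by (rule sum.cong) (auto simp: tbar_def)
  also have "\<dots> = (\<Sum>a\<in>A1. t a * x a)"
    using assms by (simp add: sum.inter_restrict[symmetric] Int_absorb1)
  finally have "(\<Sum>a\<in>A1. t a * x a) = (\<Sum>a\<in>A. x a * tbar A1 t a)" ..
  then show ?thesis
    by (simp add: follower_cost_def distrib_left sum.distrib mult.commute)
qed

lemma flow_feasible_iff_lp_dual_feasible:
  "flow_feasible V A tail head b x \<longleftrightarrow> lp_dual_feasible V A (\<lambda>a v. incidence tail head v a) b x"
  by (auto simp: flow_feasible_def lp_dual_feasible_def mult.commute)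

lemma potential_le_follower_cost:
  assumes "finite A" "A1 \<subseteq> A" "flow_feasible V A tail head b x"
    and "\<forall>a\<in>A. (\<Sum>v\<in>V. incidence tail head v a * y v) - tbar A1 t a \<le> c a"
  shows "(\<Sum>v\<in>V. b v * y v) \<le> follower_cost A A1 c t x"
proof -
  have "lp_feasible V A (\<lambda>a v. incidence tail head v a) (\<lambda>a. c a + tbar A1 t a) y"
    using assms(4) by (fastforce simp: lp_feasible_def)
  with assms(3) show ?thesis
    by (simp add: lp_weak_duality flow_feasible_iff_lp_dual_feasible
        follower_cost_eq_sum[OF assms(1,2)])
qed

lemma reaction_iff_potential:
  assumes "finite V" "finite A" "A1 \<subseteq> A"
  shows "x \<in> reaction V A A1 tail head c b t \<longleftrightarrow> flow_feasible V A tail head b x \<and>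
    (\<exists>y. (\<forall>a\<in>A. (\<Sum>v\<in>V. incidence tail head v a * y v) - tbar A1 t a \<le> c a) \<and>
         follower_cost A A1 c t x \<le> (\<Sum>v\<in>V. b v * y v))"
proof -
  let ?M = "\<lambda>a v. incidence tail head v a"
  let ?r = "\<lambda>a. c a + tbar A1 t a"
  have potential: "lp_feasible V A ?M ?r y \<longleftrightarrow>
      (\<forall>a\<in>A. (\<Sum>v\<in>V. incidence tail head v a * y v) - tbar A1 t a \<le> c a)" for y
    by (auto simp: lp_feasible_def)
  have cost: "follower_cost A A1 c t x' = (\<Sum>a\<in>A. x' a * ?r a)" for x'
    using follower_cost_eq_sum[OF assms(2,3)] .
  show ?thesis
  proof
    assume "x \<in> reaction V A A1 tail head c b t"
    then have "lp_dual_feasible V A ?M b x"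
      and "\<forall>x'. lp_dual_feasible V A ?M b x' \<longrightarrow> (\<Sum>a\<in>A. x a * ?r a) \<le> (\<Sum>a\<in>A. x' a * ?r a)"
      by (auto simp: reaction_def flow_feasible_iff_lp_dual_feasible cost)
    from lp_strong_duality_min[OF assms(1,2) this] show "flow_feasible V A tail head b x \<and>
      (\<exists>y. (\<forall>a\<in>A. (\<Sum>v\<in>V. incidence tail head v a * y v) - tbar A1 t a \<le> c a) \<and>
         follower_cost A A1 c t x \<le> (\<Sum>v\<in>V. b v * y v))"
      using \<open>lp_dual_feasible V A ?M b x\<close>
      by (auto simp: potential cost flow_feasible_iff_lp_dual_feasible)
  next
    assume "flow_feasible V A tail head b x \<and>
      (\<exists>y. (\<forall>a\<in>A. (\<Sum>v\<in>V. incidence tail head v a * y v) - tbar A1 t a \<le> c a) \<and>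
         follower_cost A A1 c t x \<le> (\<Sum>v\<in>V. b v * y v))"
    then obtain y where "flow_feasible V A tail head b x"
      and y: "\<forall>a\<in>A. (\<Sum>v\<in>V. incidence tail head v a * y v) - tbar A1 t a \<le> c a"
      and "follower_cost A A1 c t x \<le> (\<Sum>v\<in>V. b v * y v)"
      by blast
    moreover have "(\<Sum>v\<in>V. b v * y v) \<le> follower_cost A A1 c t x'"
      if "flow_feasible V A tail head b x'" for x'
      using potential_le_follower_cost[OF assms(2,3) that y] .
    ultimately show "x \<in> reaction V A A1 tail head c b t"
      by (force simp: reaction_def)
  qed
qed

lemma revenue_swap:
  "(\<Sum>k\<in>K. \<Sum>a\<in>A1. t a * x k a) = (\<Sum>a\<in>A1. (\<Sum>k\<in>K. x k a) * (t a :: real))"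
  unfolding sum_distrib_right by (subst sum.swap) (simp add: mult.commute)

lemma sum_follower_cost:
  "(\<Sum>k\<in>K. follower_cost A A1 c t (x k))
     = (\<Sum>k\<in>K. \<Sum>a\<in>A. c a * x k a) + (\<Sum>a\<in>A1. (\<Sum>k\<in>K. x k a) * t a)"
  by (simp add: follower_cost_def sum.distrib revenue_swap)

locale toll_network =
  fixes V :: "'v set" and A A1 :: "'a set" and tail head :: "'a \<Rightarrow> 'v" and c :: "'a \<Rightarrow> real"
    and K :: "'k set" and orig dest :: "'k \<Rightarrow> 'v"
  assumes finite_V: "finite V" and finite_A: "finite A" and A1_subset: "A1 \<subseteq> A"
    and finite_K: "finite K"
begin

abbreviation b :: "'k \<Rightarrow> 'v \<Rightarrow> real" where
  "b k \<equiv> demand (orig k) (dest k)"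

abbreviation R :: "'k \<Rightarrow> ('a \<Rightarrow> real) \<Rightarrow> ('a \<Rightarrow> real) set" where
  "R k t \<equiv> reaction V A A1 tail head c (b k) t"

abbreviation conj_feas :: "('a \<Rightarrow> real) \<Rightarrow> ('k \<Rightarrow> 'v \<Rightarrow> real) \<Rightarrow> bool" where
  "conj_feas \<equiv> conj_feasible V A A1 tail head c K"

abbreviation conj_obj :: "('a \<Rightarrow> real) \<Rightarrow> ('a \<Rightarrow> real) \<Rightarrow> ('k \<Rightarrow> 'v \<Rightarrow> real) \<Rightarrow> real" where
  "conj_obj \<equiv> conj_objective V A1 K orig dest"

abbreviation T :: "('a \<Rightarrow> real) \<Rightarrow> ('a \<Rightarrow> real) set" where
  "T \<equiv> conj_T V A A1 tail head c K orig dest"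

lemma finite_A1: "finite A1"
  using finite_subset[OF A1_subset finite_A] .

lemma conj_weak_duality:
  assumes "\<forall>k\<in>K. flow_feasible V A tail head (b k) (x k)"
    and "\<forall>a\<in>A1. (\<Sum>k\<in>K. x k a) \<le> w a" and "conj_feas t y"
  shows "conj_obj w t y \<le> (\<Sum>k\<in>K. \<Sum>a\<in>A. c a * x k a)"
proof -
  have "(\<Sum>v\<in>V. b k v * y k v) \<le> follower_cost A A1 c t (x k)" if "k \<in> K" for k
    using assms(1,3) that
    by (intro potential_le_follower_cost[OF finite_A A1_subset]) (auto simp: conj_feasible_def)
  then have "(\<Sum>k\<in>K. \<Sum>v\<in>V. b k v * y k v) \<le> (\<Sum>k\<in>K. follower_cost A A1 c t (x k))"
    by (rule sum_mono)
  also have "\<dots> \<le> (\<Sum>k\<in>K. \<Sum>a\<in>A. c a * x k a) + (\<Sum>a\<in>A1. w a * t a)"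
    unfolding sum_follower_cost using assms(2,3)
    by (auto simp: conj_feasible_def mult.commute intro!: sum_mono mult_left_mono)
  finally show ?thesis
    by (simp add: conj_objective_def)
qed

lemma conj_T_of_reactions:
  assumes "\<forall>a\<in>A1. 0 \<le> t a" and "\<forall>k\<in>K. x k \<in> R k t"
  shows "t \<in> T (\<lambda>a. \<Sum>k\<in>K. x k a)"
proof -
  define w where "w a = (\<Sum>k\<in>K. x k a)" for a
  have flows: "\<forall>k\<in>K. flow_feasible V A tail head (b k) (x k)"
    using assms(2) by (simp add: reaction_def)
  have "\<forall>k\<in>K. \<exists>y. (\<forall>a\<in>A. (\<Sum>v\<in>V. incidence tail head v a * y v) - tbar A1 t a \<le> c a) \<and>
      follower_cost A A1 c t (x k) \<le> (\<Sum>v\<in>V. b k v * y v)"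
    using assms(2) reaction_iff_potential[OF finite_V finite_A A1_subset] by blast
  then obtain y where y: "\<forall>k\<in>K.
      (\<forall>a\<in>A. (\<Sum>v\<in>V. incidence tail head v a * y k v) - tbar A1 t a \<le> c a) \<and>
      follower_cost A A1 c t (x k) \<le> (\<Sum>v\<in>V. b k v * y k v)"
    by (metis bchoice)
  have feasible: "conj_feas t y"
    using assms(1) y by (simp add: conj_feasible_def)
  have "(\<Sum>k\<in>K. \<Sum>a\<in>A. c a * x k a) \<le> conj_obj w t y"
  proof -
    have "(\<Sum>k\<in>K. follower_cost A A1 c t (x k)) \<le> (\<Sum>k\<in>K. \<Sum>v\<in>V. b k v * y k v)"
      using y by (intro sum_mono) blast
    then show ?thesis
      by (simp add: sum_follower_cost conj_objective_def w_def)
  qed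
  moreover have "conj_obj w t' y' \<le> (\<Sum>k\<in>K. \<Sum>a\<in>A. c a * x k a)" if "conj_feas t' y'" for t' y'
    using conj_weak_duality[OF flows _ that] by (simp add: w_def)
  ultimately show ?thesis
    using feasible unfolding conj_T_def w_def by (blast intro: order.trans)
qed

text \<open>
  The conjugate program as an inequality-form LP: its variables are the tolls and the potentials,
  its rows the conditions \<open>t \<ge> 0\<close> and the arc constraints. The dual variables of the arc
  constraints of commodity \<open>k\<close> form a flow for \<open>k\<close>.
\<close>

definition conj_lp_matrix :: "'a + 'k \<times> 'a \<Rightarrow> 'a + 'k \<times> 'v \<Rightarrow> real" where
  "conj_lp_matrix = case_sum (\<lambda>a. case_sum (\<lambda>a'. - of_bool (a' = a)) (\<lambda>_. 0))
     (\<lambda>(k, a). case_sum (\<lambda>a'. - of_bool (a' = a))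
        (\<lambda>(k', v). of_bool (k' = k) * incidence tail head v a))"

definition conj_lp_rhs :: "'a + 'k \<times> 'a \<Rightarrow> real" where
  "conj_lp_rhs = case_sum (\<lambda>_. 0) (\<lambda>(k, a). c a)"

definition conj_lp_objective :: "('a \<Rightarrow> real) \<Rightarrow> 'a + 'k \<times> 'v \<Rightarrow> real" where
  "conj_lp_objective w = case_sum (\<lambda>a. - w a) (\<lambda>(k, v). b k v)"

lemma lp_feasible_conj_lp_iff:
  "lp_feasible (A1 <+> K \<times> V) (A1 <+> K \<times> A) conj_lp_matrix conj_lp_rhs z \<longleftrightarrow>
    conj_feas (z \<circ> Inl) (\<lambda>k v. z (Inr (k, v)))"
proof -
  have "(\<Sum>i\<in>A1 <+> K \<times> V. conj_lp_matrix (Inl a) i * z i) = - z (Inl a)" if "a \<in> A1" for a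
    using that finite_A1 finite_K finite_V by (simp add: conj_lp_matrix_def sum.Plus sum_negf)
  moreover have "(\<Sum>i\<in>A1 <+> K \<times> V. conj_lp_matrix (Inr (k, a)) i * z i)
      = (\<Sum>v\<in>V. incidence tail head v a * z (Inr (k, v))) - tbar A1 (z \<circ> Inl) a" if "k \<in> K" for k a
    using that finite_A1 finite_K finite_V
    by (simp add: conj_lp_matrix_def sum.Plus sum_negf sum.cartesian_product' tbar_def mult.assoc
        flip: sum_distrib_left)
  ultimately show ?thesis
    by (auto simp: lp_feasible_def ball_Plus conj_feasible_def conj_lp_rhs_def)
qed

lemma conj_lp_objective_sum:
  "(\<Sum>i\<in>A1 <+> K \<times> V. conj_lp_objective w i * z i) = conj_obj w (z \<circ> Inl) (\<lambda>k v. z (Inr (k, v)))"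
  using finite_A1 finite_K finite_V
  by (simp add: conj_lp_objective_def sum.Plus sum.cartesian_product' conj_objective_def sum_negf
      mult.commute)

lemma conj_lp_rhs_sum:
  "(\<Sum>j\<in>A1 <+> K \<times> A. u j * conj_lp_rhs j) = (\<Sum>k\<in>K. \<Sum>a\<in>A. c a * u (Inr (k, a)))"
  using finite_A1 finite_K finite_A
  by (simp add: conj_lp_rhs_def sum.Plus sum.cartesian_product' mult.commute)

lemma conj_lp_dual_flows:
  assumes "lp_dual_feasible (A1 <+> K \<times> V) (A1 <+> K \<times> A) conj_lp_matrix (conj_lp_objective w) u"
  shows "\<forall>k\<in>K. flow_feasible V A tail head (b k) (\<lambda>a. u (Inr (k, a)))"
    and "\<forall>a\<in>A1. (\<Sum>k\<in>K. u (Inr (k, a))) \<le> w a"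
proof -
  have nonneg: "\<forall>j\<in>A1 <+> K \<times> A. 0 \<le> u j"
    and column: "\<forall>i\<in>A1 <+> K \<times> V. (\<Sum>j\<in>A1 <+> K \<times> A. u j * conj_lp_matrix j i) = conj_lp_objective w i"
    using assms by (simp_all add: lp_dual_feasible_def)
  show "\<forall>k\<in>K. flow_feasible V A tail head (b k) (\<lambda>a. u (Inr (k, a)))"
    unfolding flow_feasible_def
  proof (intro ballI conjI)
    fix k v assume "k \<in> K" "v \<in> V"
    have "(\<Sum>j\<in>A1 <+> K \<times> A. u j * conj_lp_matrix j (Inr (k, v)))
        = (\<Sum>a\<in>A. incidence tail head v a * u (Inr (k, a)))"
      using \<open>k \<in> K\<close> finite_A1 finite_K finite_A
      by (simp add: conj_lp_matrix_def sum.Plus sum.cartesian_product' mult.commute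
          mult.left_commute flip: sum_distrib_left)
    with bspec[OF column, of "Inr (k, v)"] \<open>k \<in> K\<close> \<open>v \<in> V\<close>
    show "(\<Sum>a\<in>A. incidence tail head v a * u (Inr (k, a))) = b k v"
      by (auto simp: conj_lp_objective_def)
  next
    fix k a assume "k \<in> K" "a \<in> A"
    with bspec[OF nonneg, of "Inr (k, a)"] show "0 \<le> u (Inr (k, a))"
      by auto
  qed
  show "\<forall>a\<in>A1. (\<Sum>k\<in>K. u (Inr (k, a))) \<le> w a"
  proof
    fix a assume "a \<in> A1"
    have "(\<Sum>j\<in>A1 <+> K \<times> A. u j * conj_lp_matrix j (Inl a)) = - u (Inl a) - (\<Sum>k\<in>K. u (Inr (k, a)))"
      using \<open>a \<in> A1\<close> A1_subset finite_A1 finite_K finite_A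
      by (auto simp: conj_lp_matrix_def sum.Plus sum_negf sum.cartesian_product')
    moreover have "(\<Sum>j\<in>A1 <+> K \<times> A. u j * conj_lp_matrix j (Inl a)) = - w a"
      using bspec[OF column, of "Inl a"] \<open>a \<in> A1\<close> by (auto simp: conj_lp_objective_def)
    moreover have "0 \<le> u (Inl a)"
      using bspec[OF nonneg, of "Inl a"] \<open>a \<in> A1\<close> by auto
    ultimately show "(\<Sum>k\<in>K. u (Inr (k, a))) \<le> w a"
      by linarith
  qed
qed

lemma conj_dual_flows:
  assumes "conj_feas t y" and "\<forall>t' y'. conj_feas t' y' \<longrightarrow> conj_obj w t' y' \<le> conj_obj w t y"
  shows "\<exists>x. (\<forall>k\<in>K. flow_feasible V A tail head (b k) (x k)) \<and>
    (\<forall>a\<in>A1. (\<Sum>k\<in>K. x k a) \<le> w a) \<and> (\<Sum>k\<in>K. \<Sum>a\<in>A. c a * x k a) \<le> conj_obj w t y"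
proof -
  define z where "z = case_sum t (\<lambda>(k, v). y k v)"
  have decode: "z \<circ> Inl = t" "(\<lambda>k v. z (Inr (k, v))) = y"
    by (simp_all add: z_def fun_eq_iff)
  have "finite (A1 <+> K \<times> V)" "finite (A1 <+> K \<times> A)"
    using finite_A1 finite_A finite_K finite_V by simp_all
  moreover have "lp_feasible (A1 <+> K \<times> V) (A1 <+> K \<times> A) conj_lp_matrix conj_lp_rhs z"
    and "\<forall>z'. lp_feasible (A1 <+> K \<times> V) (A1 <+> K \<times> A) conj_lp_matrix conj_lp_rhs z' \<longrightarrow>
      (\<Sum>i\<in>A1 <+> K \<times> V. conj_lp_objective w i * z' i) \<le> (\<Sum>i\<in>A1 <+> K \<times> V. conj_lp_objective w i * z i)"
    using assms by (simp_all add: lp_feasible_conj_lp_iff conj_lp_objective_sum decode)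
  ultimately obtain u
    where "lp_dual_feasible (A1 <+> K \<times> V) (A1 <+> K \<times> A) conj_lp_matrix (conj_lp_objective w) u"
      and "(\<Sum>j\<in>A1 <+> K \<times> A. u j * conj_lp_rhs j) \<le> (\<Sum>i\<in>A1 <+> K \<times> V. conj_lp_objective w i * z i)"
    by (blast dest: lp_strong_duality_max)
  with conj_lp_dual_flows show ?thesis
    by (intro exI[of _ "\<lambda>k a. u (Inr (k, a))"])
      (simp add: conj_lp_rhs_sum conj_lp_objective_sum decode)
qed

lemma reactions_of_conj_T:
  assumes "t \<in> T w"
  shows "\<exists>x. (\<forall>k\<in>K. x k \<in> R k t) \<and> (\<Sum>k\<in>K. \<Sum>a\<in>A1. t a * x k a) = (\<Sum>a\<in>A1. w a * t a)"
proof -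
  obtain y where feasible: "conj_feas t y"
    and optimal: "\<forall>t' y'. conj_feas t' y' \<longrightarrow> conj_obj w t' y' \<le> conj_obj w t y"
    using assms by (auto simp: conj_T_def)
  then obtain x where flows: "\<forall>k\<in>K. flow_feasible V A tail head (b k) (x k)"
    and capacity: "\<forall>a\<in>A1. (\<Sum>k\<in>K. x k a) \<le> w a"
    and cost: "(\<Sum>k\<in>K. \<Sum>a\<in>A. c a * x k a) \<le> conj_obj w t y"
    using conj_dual_flows by blast
  have potential: "\<forall>k\<in>K. \<forall>a\<in>A. (\<Sum>v\<in>V. incidence tail head v a * y k v) - tbar A1 t a \<le> c a"
    and "\<forall>a\<in>A1. 0 \<le> t a"
    using feasible by (simp_all add: conj_feasible_def)
  define gap where "gap k = follower_cost A A1 c t (x k) - (\<Sum>v\<in>V. b k v * y k v)" for k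
  have gap_nonneg: "\<forall>k\<in>K. 0 \<le> gap k"
    using potential_le_follower_cost[OF finite_A A1_subset] flows potential
    by (simp add: gap_def) blast
  have slack: "(\<Sum>a\<in>A1. ((\<Sum>k\<in>K. x k a) - w a) * t a) \<le> 0"
    using capacity \<open>\<forall>a\<in>A1. 0 \<le> t a\<close> by (intro sum_nonpos) (simp add: mult_nonpos_nonneg)
  have "(\<Sum>k\<in>K. gap k)
      = (\<Sum>k\<in>K. \<Sum>a\<in>A. c a * x k a) - conj_obj w t y + (\<Sum>a\<in>A1. ((\<Sum>k\<in>K. x k a) - w a) * t a)"
    by (simp add: gap_def sum_subtractf sum_follower_cost conj_objective_def left_diff_distrib)
  moreover have "0 \<le> (\<Sum>k\<in>K. gap k)"
    using gap_nonneg by (simp add: sum_nonneg)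
  ultimately have "(\<Sum>k\<in>K. gap k) = 0" and "(\<Sum>a\<in>A1. ((\<Sum>k\<in>K. x k a) - w a) * t a) = 0"
    using cost slack by linarith+
  then have "\<forall>k\<in>K. gap k = 0" and "(\<Sum>a\<in>A1. (\<Sum>k\<in>K. x k a) * t a) = (\<Sum>a\<in>A1. w a * t a)"
    using sum_nonneg_eq_0_iff[OF finite_K] gap_nonneg by (auto simp: left_diff_distrib sum_subtractf)
  moreover have "x k \<in> R k t" if "k \<in> K" "gap k = 0" for k
    using that flows potential
    by (auto simp: reaction_iff_potential[OF finite_V finite_A A1_subset] gap_def)
  ultimately show ?thesis
    by (auto simp: revenue_swap)
qed

lemma npp_revenues_eq_conj_revenues:
  "{ereal (\<Sum>k\<in>K. \<Sum>a\<in>A1. t a * x k a) | t x. (\<forall>a\<in>A1. 0 \<le> t a) \<and> (\<forall>k\<in>K. x k \<in> R k t)}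
   = {ereal (\<Sum>a\<in>A1. w a * t a) | w t. (\<forall>a\<in>A1. 0 \<le> w a) \<and> t \<in> T w}"
  (is "?npp = ?conj")
proof (intro equalityI subsetI)
  fix e assume "e \<in> ?npp"
  then obtain t x where e: "e = ereal (\<Sum>k\<in>K. \<Sum>a\<in>A1. t a * x k a)"
    and t: "\<forall>a\<in>A1. 0 \<le> t a" and x: "\<forall>k\<in>K. x k \<in> R k t"
    by blast
  have "\<forall>a\<in>A1. 0 \<le> (\<Sum>k\<in>K. x k a)"
    using x A1_subset by (auto simp: reaction_def flow_feasible_def intro!: sum_nonneg)
  moreover have "t \<in> T (\<lambda>a. \<Sum>k\<in>K. x k a)"
    using conj_T_of_reactions[OF t x] .
  ultimately show "e \<in> ?conj"
    unfolding e revenue_swap by (blast intro: exI[of _ "\<lambda>a. \<Sum>k\<in>K. x k a"])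
next
  fix e assume "e \<in> ?conj"
  then obtain w t where e: "e = ereal (\<Sum>a\<in>A1. w a * t a)" and "t \<in> T w"
    by blast
  then obtain x where "\<forall>k\<in>K. x k \<in> R k t"
    and "(\<Sum>k\<in>K. \<Sum>a\<in>A1. t a * x k a) = (\<Sum>a\<in>A1. w a * t a)"
    using reactions_of_conj_T by blast
  moreover have "\<forall>a\<in>A1. 0 \<le> t a"
    using \<open>t \<in> T w\<close> by (auto simp: conj_T_def conj_feasible_def)
  ultimately show "e \<in> ?npp"
    unfolding e by (blast intro: sym)
qed

end

theorem proposition1:
  fixes V :: "'v set" and A A1 :: "'a set" and tail head :: "'a \<Rightarrow> 'v"
    and c :: "'a \<Rightarrow> real" and K :: "'k set" and orig dest :: "'k \<Rightarrow> 'v"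
  assumes "finite V" and "finite A"
    and "\<forall>a\<in>A. tail a \<in> V \<and> head a \<in> V"
    and "A1 \<subseteq> A" and "A1 \<noteq> {}" and "A1 \<noteq> A"
    and "\<forall>a\<in>A. 0 \<le> c a"
    and "finite K"
    and "\<forall>k\<in>K. orig k \<in> V \<and> dest k \<in> V \<and> orig k \<noteq> dest k"
    and "\<forall>k\<in>K. toll_free_path A A1 tail head (orig k) (dest k)"
  shows "npp_value V A A1 tail head c K orig dest = conj_bilevel_value V A A1 tail head c K orig dest"
proof -
  interpret toll_network V A A1 tail head c K orig dest
    using assms(1,2,4,8) by unfold_locales
  show ?thesis
    unfolding npp_value_def conj_bilevel_value_def npp_revenues_eq_conj_revenues ..
qed

end
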